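(* Let $R$ be a commutative elementary divisor domain and $A,B\in M_2(R)$. Let $P_A,P_B,Q_A,Q_B\in GL_2(R)$ with $P_AAQ_A=E=\mathrm{diag}(\varepsilon_1,\varepsilon_2)$ and $P_BBQ_B=\Delta=\mathrm{diag}(\delta_1,\delta_2)$ $d$-matrices, and write $P_BP_A^{-1}=(s_{ij})_{i,j=1}^2$. Then the element $\big((\varepsilon_2,\delta_2),\,s_{21}[\varepsilon_1,\delta_1]\big)$ does not depend (up to a unit factor) on the choice of $P_A,P_B$, and a left greatest common divisor $(A,B)_l$ of $A$ and $B$ is equivalent to the $d$-matrix $$\mathrm{diag}\Big((\varepsilon_1,\delta_1),\ \big(\varepsilon_2,\delta_2,[\varepsilon_1,\delta_1]s_{21}\big)\Big).$$
   Context: An elementary divisor domain: a commutative integral domain over which every matrix is equivalent ($PAQ$, $P,Q$ invertible) to a $d$-matrix, i.e. a diagonal matrix $\mathrm{diag}(\varphi_1,\dots)$ with $\varphi_i\mid\varphi_{i+1}$; it is in particular a Bezout domain. $(a,b,\dots)$ denotes a greatest common divisor and $[a,b]$ a least common multiple (with $(a,0)=a$, $[a,0]=0$), both defined up to unit factors. $D$ is a left greatest common divisor of $A,B$ if $A=DA_1$, $B=DB_1$ for some matrices $A_1,B_1$ and every $D'$ with this property is a left divisor of $D$ ($D=D'C$ for some $C$). *)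

theory Defs
  imports "Jordan_Normal_Form.Matrix"
begin

definition is_d_matrix :: "'a::idom mat \<Rightarrow> bool" where
  "is_d_matrix D \<longleftrightarrow>
     (\<forall>i j. i < dim_row D \<longrightarrow> j < dim_col D \<longrightarrow> i \<noteq> j \<longrightarrow> D $$ (i,j) = 0) \<and>
     (\<forall>i. Suc i < min (dim_row D) (dim_col D) \<longrightarrow> D $$ (i,i) dvd D $$ (Suc i, Suc i))"

definition mat_equiv :: "'a::idom mat \<Rightarrow> 'a mat \<Rightarrow> bool" where
  "mat_equiv A B \<longleftrightarrow>
     (\<exists>P Q. P \<in> carrier_mat (dim_row A) (dim_row A) \<and> Q \<in> carrier_mat (dim_col A) (dim_col A)
        \<and> invertible_mat P \<and> invertible_mat Q \<and> P * A * Q = B)"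

definition elementary_divisor_domain :: "'a::idom itself \<Rightarrow> bool" where
  "elementary_divisor_domain _ \<longleftrightarrow>
     (\<forall>m n (A::'a mat). A \<in> carrier_mat m n \<longrightarrow> (\<exists>D. is_d_matrix D \<and> mat_equiv A D))"

definition is_gcd :: "'a::idom set \<Rightarrow> 'a \<Rightarrow> bool" where
  "is_gcd S g \<longleftrightarrow> (\<forall>s\<in>S. g dvd s) \<and> (\<forall>d. (\<forall>s\<in>S. d dvd s) \<longrightarrow> d dvd g)"

definition is_lcm :: "'a::idom \<Rightarrow> 'a \<Rightarrow> 'a \<Rightarrow> bool" where
  "is_lcm a b l \<longleftrightarrow> a dvd l \<and> b dvd l \<and> (\<forall>m. a dvd m \<longrightarrow> b dvd m \<longrightarrow> l dvd m)"

definition is_left_gcd :: "nat \<Rightarrow> 'a::idom mat \<Rightarrow> 'a mat \<Rightarrow> 'a mat \<Rightarrow> bool" where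
  "is_left_gcd n A B D \<longleftrightarrow> D \<in> carrier_mat n n \<and>
     (\<exists>A1 B1. A1 \<in> carrier_mat n n \<and> B1 \<in> carrier_mat n n \<and> A = D * A1 \<and> B = D * B1) \<and>
     (\<forall>D'. D' \<in> carrier_mat n n \<longrightarrow>
        (\<exists>A1 B1. A1 \<in> carrier_mat n n \<and> B1 \<in> carrier_mat n n \<and> A = D' * A1 \<and> B = D' * B1) \<longrightarrow>
        (\<exists>C. C \<in> carrier_mat n n \<and> D = D' * C))"

definition diag2 :: "'a::zero \<Rightarrow> 'a \<Rightarrow> 'a mat" where
  "diag2 a b = mat_diag 2 (\<lambda>i. if i = 0 then a else b)"

end

theory Submission
  imports Defs
begin

(*
  Write d_1(X) and d_2(X) for the sets of common divisors of the entries and of the 2 x 2 minors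
  of a matrix X with two rows (minor1_divisors, minor2_divisors).  They depend only on the span
  of the columns of X and are invariant under left multiplication by invertible matrices.  Over
  an elementary divisor domain the 2 x 4 matrix [A B] is right equivalent to some [D_0 0], so a
  left gcd D of A and B has the same column span as [A B], and
    d_k(D) = d_k([A B]) = d_k([S E, Delta])   with S = P_B P_A^-1.
  As det S is a unit and gcd * lcm = product, a direct computation gives
    d_1 = divisors of (eps_1, delta_1),
    d_2 = divisors of (eps_1, delta_1) * (eps_2, delta_2, [eps_1, delta_1] s_21).
  For a d-matrix diag(p_1, p_2) these are the divisors of p_1 and of p_1 p_2, which fixes p_1
  and p_2 up to units.  Since d_2([A B]) does not involve P_A and P_B, neither does
  (eps_2, delta_2, [eps_1, delta_1] s_21) once the factor (eps_1, delta_1) is cancelled; that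
  factor vanishes only if all eps_i and delta_i do.
*)

section \<open>Column spans and determinantal divisors\<close>

definition det2 :: "'a::comm_ring_1 \<times> 'a \<Rightarrow> 'a \<times> 'a \<Rightarrow> 'a" where
  "det2 u v = fst u * snd v - snd u * fst v"

inductive_set col_span :: "('a::comm_ring_1 \<times> 'a) set \<Rightarrow> ('a \<times> 'a) set" for W where
  zero: "(0, 0) \<in> col_span W"
| base: "w \<in> W \<Longrightarrow> w \<in> col_span W"
| add: "u \<in> col_span W \<Longrightarrow> v \<in> col_span W \<Longrightarrow> (fst u + fst v, snd u + snd v) \<in> col_span W"
| smult: "u \<in> col_span W \<Longrightarrow> (r * fst u, r * snd u) \<in> col_span W"

definition same_col_span :: "('a::comm_ring_1 \<times> 'a) set \<Rightarrow> ('a \<times> 'a) set \<Rightarrow> bool" where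
  "same_col_span W W' \<longleftrightarrow> W \<subseteq> col_span W' \<and> W' \<subseteq> col_span W"

definition minor1_divisors :: "('a::comm_ring_1 \<times> 'a) set \<Rightarrow> 'a set" where
  "minor1_divisors W = {c. \<forall>u\<in>W. c dvd fst u \<and> c dvd snd u}"

definition minor2_divisors :: "('a::comm_ring_1 \<times> 'a) set \<Rightarrow> 'a set" where
  "minor2_divisors W = {c. \<forall>u\<in>W. \<forall>v\<in>W. c dvd det2 u v}"

lemma col_span_mono: "u \<in> col_span W \<Longrightarrow> W \<subseteq> W' \<Longrightarrow> u \<in> col_span W'"
  by (induction rule: col_span.induct) (auto intro: col_span.intros)

lemma col_span_trans: "u \<in> col_span W \<Longrightarrow> W \<subseteq> col_span W' \<Longrightarrow> u \<in> col_span W'"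
  by (induction rule: col_span.induct) (auto intro: col_span.intros)

lemma col_span_sum:
  assumes "finite K" "\<And>i. i \<in> K \<Longrightarrow> (a i, b i) \<in> col_span W"
  shows "((\<Sum>i\<in>K. a i * f i), (\<Sum>i\<in>K. b i * f i)) \<in> col_span W"
  using assms
proof (induction K rule: finite_induct)
  case empty
  then show ?case by (simp add: col_span.zero)
next
  case (insert x F)
  have "(f x * a x, f x * b x) \<in> col_span W"
    using col_span.smult[of "(a x, b x)" W "f x"] insert by simp
  then have "(a x * f x, b x * f x) \<in> col_span W" by (simp add: mult.commute)
  from col_span.add[OF this insert.IH] insert show ?case by simp
qed

lemma col_span_pair:
  "u \<in> col_span {v, w} \<Longrightarrow> \<exists>x y. u = (x * fst v + y * fst w, x * snd v + y * snd w)"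
proof (induction rule: col_span.induct)
  case zero
  then show ?case by (intro exI[of _ 0]) simp
next
  case (base u)
  then show ?case
  proof
    assume "u = v"
    then show ?thesis by (intro exI[of _ 1] exI[of _ 0]) simp
  next
    assume "u \<in> {w}"
    then show ?thesis by (intro exI[of _ 0] exI[of _ 1]) simp
  qed
next
  case (add u u')
  then obtain x y x' y' where "u = (x * fst v + y * fst w, x * snd v + y * snd w)"
    "u' = (x' * fst v + y' * fst w, x' * snd v + y' * snd w)" by blast
  then show ?case by (intro exI[of _ "x + x'"] exI[of _ "y + y'"]) (simp add: algebra_simps)
next
  case (smult u r)
  then obtain x y where "u = (x * fst v + y * fst w, x * snd v + y * snd w)" by blast
  then show ?case by (intro exI[of _ "r * x"] exI[of _ "r * y"]) (simp add: algebra_simps)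
qed

lemma same_col_span_sym: "same_col_span W W' \<Longrightarrow> same_col_span W' W"
  by (auto simp: same_col_span_def)

lemma same_col_span_trans: "same_col_span W W' \<Longrightarrow> same_col_span W' W'' \<Longrightarrow> same_col_span W W''"
  unfolding same_col_span_def using col_span_trans by blast

lemma same_col_span_Un:
  "same_col_span W\<^sub>1 W\<^sub>1' \<Longrightarrow> same_col_span W\<^sub>2 W\<^sub>2' \<Longrightarrow> same_col_span (W\<^sub>1 \<union> W\<^sub>2) (W\<^sub>1' \<union> W\<^sub>2')"
  unfolding same_col_span_def using col_span_mono by blast

lemma minor1_divisors_col_span:
  "u \<in> col_span W \<Longrightarrow> c \<in> minor1_divisors W \<Longrightarrow> c dvd fst u \<and> c dvd snd u"
  by (induction rule: col_span.induct) (auto simp: minor1_divisors_def)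

lemma det2_add_right: "det2 u (fst v + fst w, snd v + snd w) = det2 u v + det2 u w"
  and det2_smult_right: "det2 u (r * fst v, r * snd v) = r * det2 u v"
  and det2_swap: "det2 v u = - det2 u v"
  by (simp_all add: det2_def algebra_simps)

lemma minor2_divisors_col_span_right:
  assumes "v \<in> col_span W" "c \<in> minor2_divisors W" "u \<in> W"
  shows "c dvd det2 u v"
  using assms
proof (induction rule: col_span.induct)
  case zero
  then show ?case by (simp add: det2_def)
next
  case (base w)
  then show ?case by (auto simp: minor2_divisors_def)
qed (simp_all add: det2_add_right det2_smult_right)

lemma minor2_divisors_col_span:
  assumes "u \<in> col_span W" "c \<in> minor2_divisors W" "v \<in> col_span W"
  shows "c dvd det2 u v"
  using assms
proof (induction rule: col_span.induct)
  case zero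
  then show ?case by (simp add: det2_def)
next
  case (base w)
  then show ?case using minor2_divisors_col_span_right[of v W c w] det2_swap[of w v] by simp
next
  case (add u u')
  then show ?case using det2_swap[of v] det2_add_right[of v u u'] by (metis dvd_add dvd_minus_iff)
next
  case (smult u r)
  then show ?case using det2_swap[of v] det2_smult_right[of v r u] by (metis dvd_mult dvd_minus_iff)
qed

lemma minor1_divisors_antimono: "W \<subseteq> col_span W' \<Longrightarrow> minor1_divisors W' \<subseteq> minor1_divisors W"
  using minor1_divisors_col_span unfolding minor1_divisors_def by blast

lemma minor2_divisors_antimono: "W \<subseteq> col_span W' \<Longrightarrow> minor2_divisors W' \<subseteq> minor2_divisors W"
  using minor2_divisors_col_span unfolding minor2_divisors_def by blast

lemma same_col_span_minor_divisors:
  "same_col_span W W' \<Longrightarrow> minor1_divisors W = minor1_divisors W' \<and> minor2_divisors W = minor2_divisors W'"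
  unfolding same_col_span_def using minor1_divisors_antimono minor2_divisors_antimono by blast

definition col_pair :: "'a mat \<Rightarrow> nat \<Rightarrow> 'a \<times> 'a" where
  "col_pair X j = (X $$ (0, j), X $$ (1, j))"

definition col_pairs :: "'a mat \<Rightarrow> ('a \<times> 'a) set" where
  "col_pairs X = col_pair X ` {..<dim_col X}"

definition mat2_apply :: "'a::comm_ring_1 mat \<Rightarrow> 'a \<times> 'a \<Rightarrow> 'a \<times> 'a" where
  "mat2_apply P u = (P $$ (0,0) * fst u + P $$ (0,1) * snd u, P $$ (1,0) * fst u + P $$ (1,1) * snd u)"

lemma index_mult_mat_2:
  "X \<in> carrier_mat m 2 \<Longrightarrow> Y \<in> carrier_mat 2 n \<Longrightarrow> i < m \<Longrightarrow> j < n \<Longrightarrow>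
   (X * Y) $$ (i, j) = X $$ (i,0) * Y $$ (0,j) + X $$ (i,1) * Y $$ (1,j)"
  by (auto simp: scalar_prod_def numeral_2_eq_2)

lemma col_pairs_2: "X \<in> carrier_mat m 2 \<Longrightarrow> col_pairs X = {col_pair X 0, col_pair X 1}"
  unfolding col_pairs_def by (auto simp: numeral_2_eq_2 lessThan_Suc)

lemma col_pairs_mult_subset:
  assumes "X \<in> carrier_mat 2 k" "Y \<in> carrier_mat k n"
  shows "col_pairs (X * Y) \<subseteq> col_span (col_pairs X)"
proof
  fix u assume "u \<in> col_pairs (X * Y)"
  then obtain j where j: "j < n" "u = col_pair (X * Y) j" using assms by (auto simp: col_pairs_def)
  have "u = ((\<Sum>l\<in>{..<k}. X $$ (0,l) * Y $$ (l,j)), (\<Sum>l\<in>{..<k}. X $$ (1,l) * Y $$ (l,j)))"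
    using j assms by (simp add: col_pair_def scalar_prod_def atLeast0LessThan)
  also have "\<dots> \<in> col_span (col_pairs X)"
    by (rule col_span_sum) (use assms in \<open>auto simp: col_pairs_def col_pair_def intro!: col_span.base\<close>)
  finally show "u \<in> col_span (col_pairs X)" .
qed

lemma same_col_span_mult_invertible:
  assumes "X \<in> carrier_mat 2 n" "Q \<in> carrier_mat n n" "Q' \<in> carrier_mat n n" "Q * Q' = 1\<^sub>m n"
  shows "same_col_span (col_pairs X) (col_pairs (X * Q))"
proof -
  have "X = X * Q * Q'" using assms by (simp add: right_mult_one_mat)
  then have "col_pairs X \<subseteq> col_span (col_pairs (X * Q))"
    using col_pairs_mult_subset[of "X * Q" n Q' n] assms by auto
  then show ?thesis unfolding same_col_span_def using col_pairs_mult_subset[of X n Q n] assms by auto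
qed

lemma col_pair_mult_left:
  "P \<in> carrier_mat 2 2 \<Longrightarrow> Y \<in> carrier_mat 2 n \<Longrightarrow> j < n \<Longrightarrow> col_pair (P * Y) j = mat2_apply P (col_pair Y j)"
  by (simp add: col_pair_def mat2_apply_def scalar_prod_def numeral_2_eq_2)

lemma col_pairs_mult_left:
  assumes "P \<in> carrier_mat 2 2" "Y \<in> carrier_mat 2 n"
  shows "col_pairs (P * Y) = mat2_apply P ` col_pairs Y"
  using assms by (force simp: col_pairs_def col_pair_mult_left)

lemma mat2_apply_mult:
  "P \<in> carrier_mat 2 2 \<Longrightarrow> P' \<in> carrier_mat 2 2 \<Longrightarrow> mat2_apply (P' * P) u = mat2_apply P' (mat2_apply P u)"
  by (simp add: mat2_apply_def scalar_prod_def numeral_2_eq_2 algebra_simps)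

lemma mat2_apply_one [simp]: "mat2_apply (1\<^sub>m 2) u = u"
  by (simp add: mat2_apply_def)

lemma det2_mat2_apply:
  "det2 (mat2_apply P u) (mat2_apply P v) = det2 (col_pair P 0) (col_pair P 1) * det2 u v"
  by (simp add: det2_def mat2_apply_def col_pair_def algebra_simps)

lemma minor1_divisors_mat2_apply_subset: "minor1_divisors W \<subseteq> minor1_divisors (mat2_apply P ` W)"
  by (auto simp: minor1_divisors_def mat2_apply_def)

lemma minor2_divisors_mat2_apply_subset: "minor2_divisors W \<subseteq> minor2_divisors (mat2_apply P ` W)"
  by (auto simp: minor2_divisors_def det2_mat2_apply)

lemma minor_divisors_mat2_apply_invertible:
  assumes "P \<in> carrier_mat 2 2" "P' \<in> carrier_mat 2 2" "P' * P = 1\<^sub>m 2"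
  shows "minor1_divisors (mat2_apply P ` W) = minor1_divisors W"
    and "minor2_divisors (mat2_apply P ` W) = minor2_divisors W"
proof -
  have "mat2_apply P' ` mat2_apply P ` W = W"
    using assms by (simp add: image_image mat2_apply_mult[symmetric])
  then show "minor1_divisors (mat2_apply P ` W) = minor1_divisors W"
    "minor2_divisors (mat2_apply P ` W) = minor2_divisors W"
    using minor1_divisors_mat2_apply_subset[of W P] minor1_divisors_mat2_apply_subset[of "mat2_apply P ` W" P']
      minor2_divisors_mat2_apply_subset[of W P] minor2_divisors_mat2_apply_subset[of "mat2_apply P ` W" P']
    by (simp_all add: subset_antisym)
qed

lemma det2_col_pairs_unit:
  assumes "X \<in> carrier_mat 2 2" "Y \<in> carrier_mat 2 2" "X * Y = 1\<^sub>m 2"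
  shows "det2 (col_pair X 0) (col_pair X 1) dvd 1"
proof -
  have "det2 (col_pair X 0) (col_pair X 1) * det2 (col_pair Y 0) (col_pair Y 1)
      = det2 (col_pair (X * Y) 0) (col_pair (X * Y) 1)"
    using assms(1,2) by (simp add: col_pair_mult_left det2_mat2_apply)
  also have "\<dots> = 1" using assms(3) by (simp add: det2_def col_pair_def)
  finally show ?thesis by (metis dvdI)
qed

lemma invertible_matE:
  assumes "invertible_mat P" "P \<in> carrier_mat n n"
  obtains P' where "P' \<in> carrier_mat n n" "P * P' = 1\<^sub>m n" "P' * P = 1\<^sub>m n"
proof -
  obtain B where B: "P * B = 1\<^sub>m (dim_row P)" "B * P = 1\<^sub>m (dim_row B)"
    using assms unfolding invertible_mat_def inverts_mat_def by blast
  then have "dim_row B = n" "dim_col B = n"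
    using assms(2) by (metis carrier_matD index_mult_mat(2,3) index_one_mat(2,3))+
  with B assms(2) show thesis by (intro that[of B]) auto
qed

lemma invertible_mat_mult:
  assumes "invertible_mat P" "P \<in> carrier_mat n n" "invertible_mat Q" "Q \<in> carrier_mat n n"
  shows "invertible_mat (P * Q)"
proof -
  obtain P' where P': "P' \<in> carrier_mat n n" "P * P' = 1\<^sub>m n" "P' * P = 1\<^sub>m n"
    using invertible_matE assms(1,2) by blast
  obtain Q' where Q': "Q' \<in> carrier_mat n n" "Q * Q' = 1\<^sub>m n" "Q' * Q = 1\<^sub>m n"
    using invertible_matE assms(3,4) by blast
  have "P * Q * (Q' * P') = P * (Q * (Q' * P'))"
    using assms P' Q' by (meson assoc_mult_mat mult_carrier_mat)
  also have "Q * (Q' * P') = (Q * Q') * P'"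
    using assms P' Q' by (meson assoc_mult_mat[symmetric])
  finally have right: "P * Q * (Q' * P') = 1\<^sub>m n" using P' Q' by simp
  have "Q' * P' * (P * Q) = Q' * (P' * (P * Q))"
    using assms P' Q' by (meson assoc_mult_mat mult_carrier_mat)
  also have "P' * (P * Q) = (P' * P) * Q"
    using assms P' Q' by (meson assoc_mult_mat[symmetric])
  finally have "Q' * P' * (P * Q) = 1\<^sub>m n" using assms P' Q' by simp
  with right show ?thesis unfolding invertible_mat_def inverts_mat_def using assms P' Q'
    by (intro conjI exI[of _ "Q' * P'"]) (auto simp: square_mat.simps)
qed

lemma mat_mult_left_inverse_cancel:
  fixes M :: "'a::semiring_1 mat"
  assumes "M \<in> carrier_mat m n" "P \<in> carrier_mat m m" "Q \<in> carrier_mat n n"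
    and "P' \<in> carrier_mat m m" "P' * P = 1\<^sub>m m" "P * M * Q = D"
  shows "M * Q = P' * D"
proof -
  have MQ: "M * Q \<in> carrier_mat m n" using assms(1,3) by simp
  have "M * Q = P' * P * (M * Q)" using left_mult_one_mat[OF MQ] assms(5) by simp
  also have "\<dots> = P' * (P * (M * Q))" by (rule assoc_mult_mat[OF assms(4,2) MQ])
  also have "P * (M * Q) = D" using assoc_mult_mat[OF assms(2,1,3)] assms(6) by simp
  finally show ?thesis .
qed

lemma diag2_carrier: "diag2 a b \<in> carrier_mat 2 2"
  and dim_diag2 [simp]: "dim_row (diag2 a b) = 2" "dim_col (diag2 a b) = 2"
  by (simp_all add: diag2_def mat_diag_def)

lemma is_d_matrix_diag2_iff: "is_d_matrix (diag2 a b) \<longleftrightarrow> a dvd b"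
  by (auto simp: is_d_matrix_def diag2_def mat_diag_def less_2_cases_iff)

lemma is_d_matrix_2x2_eq_diag2:
  assumes "is_d_matrix D" "D \<in> carrier_mat 2 2"
  shows "D = diag2 (D $$ (0,0)) (D $$ (1,1))"
proof (rule eq_matI)
  fix i j assume "i < dim_row (diag2 (D $$ (0,0)) (D $$ (1,1)))" "j < dim_col (diag2 (D $$ (0,0)) (D $$ (1,1)))"
  then have "i < 2" "j < 2" by simp_all
  then show "D $$ (i,j) = diag2 (D $$ (0,0)) (D $$ (1,1)) $$ (i,j)"
    using assms unfolding is_d_matrix_def by (auto simp: less_2_cases_iff diag2_def mat_diag_def)
qed (use assms diag2_carrier in auto)

lemma col_pairs_diag2: "col_pairs (diag2 a b) = {(a,0), (0,b)}"
proof -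
  have "col_pairs (diag2 a b) = {col_pair (diag2 a b) 0, col_pair (diag2 a b) 1}"
    by (rule col_pairs_2[OF diag2_carrier])
  then show ?thesis by (simp add: col_pair_def diag2_def mat_diag_def)
qed

lemma col_pairs_mult_diag2:
  fixes S :: "'a::comm_ring_1 mat"
  assumes "S \<in> carrier_mat 2 2"
  shows "col_pairs (S * diag2 a b) = {(S $$ (0,0) * a, S $$ (1,0) * a), (S $$ (0,1) * b, S $$ (1,1) * b)}"
  by (simp add: col_pairs_mult_left[OF assms diag2_carrier] col_pairs_diag2 mat2_apply_def)

lemma minor1_divisors_diag2: "a dvd b \<Longrightarrow> minor1_divisors (col_pairs (diag2 a b)) = {c. c dvd a}"
  by (auto simp: col_pairs_diag2 minor1_divisors_def intro: dvd_trans)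

lemma minor2_divisors_diag2: "minor2_divisors (col_pairs (diag2 a b)) = {c. c dvd a * b}"
  by (auto simp: col_pairs_diag2 minor2_divisors_def det2_def mult.commute)

lemma mat_equiv_minor_divisors:
  assumes "mat_equiv X Y" "X \<in> carrier_mat 2 n"
  shows "minor1_divisors (col_pairs Y) = minor1_divisors (col_pairs X)"
    and "minor2_divisors (col_pairs Y) = minor2_divisors (col_pairs X)"
proof -
  obtain P Q where P: "P \<in> carrier_mat 2 2" "invertible_mat P" and Q: "Q \<in> carrier_mat n n" "invertible_mat Q"
    and Y: "Y = P * X * Q"
    using assms unfolding mat_equiv_def by auto
  obtain P' where P': "P' \<in> carrier_mat 2 2" "P' * P = 1\<^sub>m 2" using invertible_matE[OF P(2,1)] by metis
  obtain Q' where Q': "Q' \<in> carrier_mat n n" "Q * Q' = 1\<^sub>m n" using invertible_matE[OF Q(2,1)] by metis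
  have "col_pairs Y = mat2_apply P ` col_pairs (X * Q)"
    using Y assms(2) P Q by (simp add: assoc_mult_mat[of P 2 2 X n Q n] col_pairs_mult_left[of _ _ n])
  then show "minor1_divisors (col_pairs Y) = minor1_divisors (col_pairs X)"
    "minor2_divisors (col_pairs Y) = minor2_divisors (col_pairs X)"
    using minor_divisors_mat2_apply_invertible[OF P(1) P']
      same_col_span_minor_divisors[OF same_col_span_mult_invertible[OF assms(2) Q(1) Q']] by simp_all
qed

lemma mat_equiv_trans:
  assumes "mat_equiv X Y" "mat_equiv Y Z"
  shows "mat_equiv X Z"
proof -
  define r c where "r = dim_row X" and "c = dim_col X"
  have X: "X \<in> carrier_mat r c" unfolding r_def c_def by blast
  obtain P Q where P: "P \<in> carrier_mat r r" "invertible_mat P"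
    and Q: "Q \<in> carrier_mat c c" "invertible_mat Q" and Y: "Y = P * X * Q"
    using assms(1) unfolding mat_equiv_def r_def c_def by blast
  then have "dim_row Y = r" "dim_col Y = c" by simp_all
  then obtain P' Q' where P': "P' \<in> carrier_mat r r" "invertible_mat P'"
    and Q': "Q' \<in> carrier_mat c c" "invertible_mat Q'" and Z: "Z = P' * Y * Q'"
    using assms(2) unfolding mat_equiv_def by auto
  have PX: "P * X \<in> carrier_mat r c" "P' * P \<in> carrier_mat r r" using P(1) P'(1) X by auto
  have "Z = P' * (P * X * Q * Q')"
    unfolding Z Y using PX P Q P' Q' by (meson assoc_mult_mat mult_carrier_mat)
  also have "P * X * Q * Q' = P * X * (Q * Q')"
    using PX Q Q' by (meson assoc_mult_mat)
  also have "P' * (P * X * (Q * Q')) = P' * (P * X) * (Q * Q')"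
    using assoc_mult_mat[OF P'(1) PX(1) mult_carrier_mat[OF Q(1) Q'(1)]] by simp
  also have "P' * (P * X) = P' * P * X"
    using assoc_mult_mat[OF P'(1) P(1) X] by simp
  finally have "Z = (P' * P) * X * (Q * Q')" .
  moreover have "invertible_mat (P' * P)" "invertible_mat (Q * Q')"
    using P Q P' Q' invertible_mat_mult by blast+
  moreover have "P' * P \<in> carrier_mat r r" "Q * Q' \<in> carrier_mat c c"
    using P Q P' Q' by (metis mult_carrier_mat)+
  ultimately show ?thesis unfolding mat_equiv_def r_def c_def by blast
qed

lemma associatedE:
  fixes a b :: "'a::idom"
  assumes "a dvd b" "b dvd a"
  obtains u where "u dvd 1" "b = u * a"
proof (cases "a = 0")
  case True
  then show ?thesis using assms that[of 1] by simp
next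
  case False
  obtain k where k: "b = a * k" using assms(1) by (auto elim: dvdE)
  obtain m where m: "a = b * m" using assms(2) by (auto elim: dvdE)
  have "a * (k * m) = a * 1" using k m by (metis mult.assoc mult.commute mult_1_right)
  then have "k * m = 1" using False mult_cancel_left by blast
  then show ?thesis using k that[of k] by (simp add: mult.commute dvdI)
qed

lemma mat_equiv_diag2_associated:
  fixes a b a' b' :: "'a::idom"
  assumes "a dvd a'" "a' dvd a" "b dvd b'" "b' dvd b"
  shows "mat_equiv (diag2 a b) (diag2 a' b')"
proof -
  obtain u where u: "u dvd 1" "a' = u * a" using associatedE assms(1,2) by metis
  obtain v where v: "v dvd 1" "b' = v * b" using associatedE assms(3,4) by metis
  obtain u' v' where u'v': "u * u' = 1" "v * v' = 1" using u(1) v(1) by (metis dvdE)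
  define U where "U = diag2 u v"
  have "(\<lambda>i. (if i = 0 then u else v) * (if i = 0 then u' else v')) = (\<lambda>i::nat. 1)"
    "(\<lambda>i. (if i = 0 then u' else v') * (if i = 0 then u else v)) = (\<lambda>i::nat. 1)"
    using u'v' by (auto simp: mult.commute)
  then have "U * diag2 u' v' = 1\<^sub>m 2" "diag2 u' v' * U = 1\<^sub>m 2"
    by (simp_all add: U_def diag2_def)
  then have "invertible_mat U"
    unfolding invertible_mat_def inverts_mat_def by (auto simp: U_def square_mat.simps)
  moreover have "(\<lambda>i. (if i = 0 then u else v) * (if i = 0 then a else b)) =
      (\<lambda>i::nat. if i = 0 then a' else b')"
    using u v by auto
  then have "U * diag2 a b * 1\<^sub>m 2 = diag2 a' b'"
    using right_mult_one_mat[OF diag2_carrier] by (simp add: U_def diag2_def)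
  moreover have "invertible_mat (1\<^sub>m 2 :: 'a mat)"
    unfolding invertible_mat_def inverts_mat_def by (auto simp: square_mat.simps intro!: exI[of _ "1\<^sub>m 2"])
  ultimately show ?thesis unfolding mat_equiv_def
    by (intro exI[of _ U] exI[of _ "1\<^sub>m 2"] conjI) (simp_all only: U_def dim_diag2 diag2_carrier one_carrier_mat)
qed

section \<open>Elementary divisor domains\<close>

lemma edd_bezout:
  fixes a b :: "'a::idom"
  assumes "elementary_divisor_domain TYPE('a)"
  obtains p q where "(p * a + q * b) dvd a" "(p * a + q * b) dvd b"
proof -
  define M :: "'a mat" where "M = mat 1 2 (\<lambda>(i,j). if j = 0 then a else b)"
  have M: "M \<in> carrier_mat 1 2" by (simp add: M_def)
  have "\<exists>D. is_d_matrix D \<and> mat_equiv M D"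
    using assms M unfolding elementary_divisor_domain_def by blast
  then obtain D P Q where D: "is_d_matrix D" and P: "P \<in> carrier_mat 1 1" "invertible_mat P"
    and Q: "Q \<in> carrier_mat 2 2" "invertible_mat Q" and eq: "P * M * Q = D"
    using M unfolding mat_equiv_def by auto
  obtain P' where P': "P' \<in> carrier_mat 1 1" "P' * P = 1\<^sub>m 1" using invertible_matE[OF P(2,1)] by metis
  obtain Q' where Q': "Q' \<in> carrier_mat 2 2" "Q * Q' = 1\<^sub>m 2" using invertible_matE[OF Q(2,1)] by metis
  define N where "N = M * Q"
  have N: "N \<in> carrier_mat 1 2" using M Q by (simp add: N_def)
  have Dc: "D \<in> carrier_mat 1 2" using eq P M Q by auto
  have D01: "D $$ (0,1) = 0" using D Dc unfolding is_d_matrix_def by auto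
  have "N = P' * D" unfolding N_def by (rule mat_mult_left_inverse_cancel[OF M P(1) Q(1) P' eq])
  then have N01: "N $$ (0,1) = 0" using P' Dc D01 by (simp add: scalar_prod_def)
  have "M = N * Q'" unfolding N_def using M Q Q' by (simp add: right_mult_one_mat)
  moreover have "M $$ (0,0) = a" "M $$ (0,1) = b" by (simp_all add: M_def)
  ultimately have "a = N $$ (0,0) * Q' $$ (0,0)" "b = N $$ (0,0) * Q' $$ (0,1)"
    using index_mult_mat_2[OF N Q'(1), of 0 0] index_mult_mat_2[OF N Q'(1), of 0 1] N01
    by simp_all
  moreover have "N $$ (0,0) = Q $$ (0,0) * a + Q $$ (1,0) * b"
    using index_mult_mat_2[OF M Q(1), of 0 0] by (simp add: N_def M_def mult.commute)
  ultimately show thesis using that by (metis dvd_triv_left)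
qed

lemma edd_gcd_exists:
  fixes a b :: "'a::idom"
  assumes "elementary_divisor_domain TYPE('a)"
  obtains g where "is_gcd {a, b} g"
proof -
  obtain p q where "(p * a + q * b) dvd a" "(p * a + q * b) dvd b" using edd_bezout[OF assms] .
  then have "is_gcd {a, b} (p * a + q * b)" by (auto simp: is_gcd_def)
  then show thesis using that by blast
qed

lemma is_gcd_bezout:
  fixes a b g :: "'a::idom"
  assumes "elementary_divisor_domain TYPE('a)" "is_gcd {a, b} g"
  obtains p q where "g = p * a + q * b"
proof -
  obtain p q where pq: "(p * a + q * b) dvd a" "(p * a + q * b) dvd b" using edd_bezout[OF assms(1)] .
  then have "(p * a + q * b) dvd g" using assms(2) by (auto simp: is_gcd_def)
  then obtain k where "g = (p * a + q * b) * k" by (auto elim: dvdE)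
  then have "g = (p * k) * a + (q * k) * b" by (simp add: algebra_simps)
  then show thesis using that by blast
qed

lemma is_gcd3_bezout:
  fixes a b c g :: "'a::idom"
  assumes "elementary_divisor_domain TYPE('a)" "is_gcd {a, b, c} g"
  obtains p q r where "g = p * a + q * b + r * c"
proof -
  obtain d where d: "is_gcd {a, b} d" using edd_gcd_exists[OF assms(1)] .
  obtain p q where pq: "d = p * a + q * b" using is_gcd_bezout[OF assms(1) d] .
  obtain e where e: "is_gcd {d, c} e" using edd_gcd_exists[OF assms(1)] .
  obtain p' r where pr: "e = p' * d + r * c" using is_gcd_bezout[OF assms(1) e] .
  have "e dvd a" "e dvd b" "e dvd c" using d e dvd_trans by (auto simp: is_gcd_def)
  then have "e dvd g" using assms(2) by (auto simp: is_gcd_def)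
  then obtain k where "g = e * k" by (auto elim: dvdE)
  then have "g = (p' * p * k) * a + (p' * q * k) * b + (r * k) * c"
    using pq pr by (simp add: algebra_simps)
  then show thesis using that by blast
qed

lemma edd_equiv_diag2:
  fixes D :: "'a::idom mat"
  assumes "elementary_divisor_domain TYPE('a)" "D \<in> carrier_mat 2 2"
  obtains p\<^sub>1 p\<^sub>2 where "p\<^sub>1 dvd p\<^sub>2" "mat_equiv D (diag2 p\<^sub>1 p\<^sub>2)"
proof -
  obtain D' where D': "is_d_matrix D'" "mat_equiv D D'"
    using assms unfolding elementary_divisor_domain_def by blast
  then have "D' \<in> carrier_mat 2 2" using assms(2) unfolding mat_equiv_def by auto
  then have "D' = diag2 (D' $$ (0,0)) (D' $$ (1,1))" using is_d_matrix_2x2_eq_diag2 D'(1) by blast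
  then show thesis using that D' is_d_matrix_diag2_iff by metis
qed

section \<open>Left greatest common divisors\<close>

definition mat_append_cols :: "'a mat \<Rightarrow> 'a mat \<Rightarrow> 'a mat" where
  "mat_append_cols A B = mat (dim_row A) (dim_col A + dim_col B)
     (\<lambda>(i,j). if j < dim_col A then A $$ (i,j) else B $$ (i, j - dim_col A))"

lemma col_pairs_mat_append_cols:
  assumes "A \<in> carrier_mat 2 m" "B \<in> carrier_mat 2 n"
  shows "col_pairs (mat_append_cols A B) = col_pairs A \<union> col_pairs B"
proof -
  have "col_pair (mat_append_cols A B) j = (if j < m then col_pair A j else col_pair B (j - m))"
    if "j < m + n" for j
    using assms that by (simp add: col_pair_def mat_append_cols_def)
  then have "col_pairs (mat_append_cols A B) = col_pair A ` {..<m} \<union> (\<lambda>j. col_pair B (j - m)) ` {m..<m + n}"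
    using assms by (auto simp: col_pairs_def mat_append_cols_def image_iff)
  also have "(\<lambda>j. col_pair B (j - m)) ` {m..<m + n} = col_pair B ` {..<n}"
    by (force simp: image_iff intro: bexI[of _ "_ + m"])
  finally show ?thesis using assms by (simp add: col_pairs_def)
qed

lemma edd_same_col_span_2x2:
  fixes M :: "'a::idom mat"
  assumes edd: "elementary_divisor_domain TYPE('a)" and M: "M \<in> carrier_mat 2 n" and "2 \<le> n"
  obtains D\<^sub>0 where "D\<^sub>0 \<in> carrier_mat 2 2" "same_col_span (col_pairs D\<^sub>0) (col_pairs M)"
proof -
  have "\<exists>D. is_d_matrix D \<and> mat_equiv M D" using edd M unfolding elementary_divisor_domain_def by blast
  then obtain D P Q where D: "is_d_matrix D" and P: "P \<in> carrier_mat 2 2" "invertible_mat P"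
    and Q: "Q \<in> carrier_mat n n" "invertible_mat Q" and eq: "P * M * Q = D"
    using M unfolding mat_equiv_def by auto
  obtain P' where P': "P' \<in> carrier_mat 2 2" "P' * P = 1\<^sub>m 2" using invertible_matE[OF P(2,1)] by metis
  obtain Q' where Q': "Q' \<in> carrier_mat n n" "Q * Q' = 1\<^sub>m n" using invertible_matE[OF Q(2,1)] by metis
  define N where "N = M * Q"
  have N: "N \<in> carrier_mat 2 n" using M Q by (simp add: N_def)
  have Dc: "D \<in> carrier_mat 2 n" using eq P M Q by auto
  have ND: "N = P' * D" unfolding N_def by (rule mat_mult_left_inverse_cancel[OF M P(1) Q(1) P' eq])
  \<comment> \<open>Off the diagonal the d-matrix D vanishes, so only the first two columns of N survive.\<close>
  have N_zero: "col_pair N j = (0, 0)" if "2 \<le> j" "j < n" for j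
  proof -
    have "D $$ (k, j) = 0" if "k < 2" for k using D Dc that \<open>2 \<le> j\<close> \<open>j < n\<close> unfolding is_d_matrix_def by auto
    then show ?thesis using that index_mult_mat_2[OF P'(1) Dc, of _ j] by (simp add: col_pair_def ND)
  qed
  define D\<^sub>0 where "D\<^sub>0 = mat 2 2 (\<lambda>(i,j). N $$ (i,j))"
  have D\<^sub>0: "D\<^sub>0 \<in> carrier_mat 2 2" by (simp add: D\<^sub>0_def)
  have col_D\<^sub>0: "col_pair D\<^sub>0 j = col_pair N j" if "j < 2" for j using that by (simp add: col_pair_def D\<^sub>0_def)
  have "col_pairs D\<^sub>0 \<subseteq> col_pairs N" using D\<^sub>0 N col_D\<^sub>0 \<open>2 \<le> n\<close> by (force simp: col_pairs_def)
  moreover have "col_pairs N \<subseteq> col_span (col_pairs D\<^sub>0)"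
  proof
    fix u assume "u \<in> col_pairs N"
    then obtain j where j: "j < n" "u = col_pair N j" using N by (auto simp: col_pairs_def)
    show "u \<in> col_span (col_pairs D\<^sub>0)"
    proof (cases "j < 2")
      case True
      then show ?thesis using j col_D\<^sub>0 D\<^sub>0 by (auto simp: col_pairs_def intro!: col_span.base)
    next
      case False
      then show ?thesis using j N_zero col_span.zero by simp
    qed
  qed
  ultimately have "same_col_span (col_pairs D\<^sub>0) (col_pairs N)"
    unfolding same_col_span_def using col_span.base by blast
  then show thesis using that D\<^sub>0 same_col_span_sym same_col_span_trans
      same_col_span_mult_invertible[OF M Q(1) Q'] unfolding N_def by metis
qed

lemma left_factor_of_col_span:
  fixes X D :: "'a::comm_ring_1 mat"
  assumes X: "X \<in> carrier_mat 2 2" and D: "D \<in> carrier_mat 2 2" and sub: "col_pairs X \<subseteq> col_span (col_pairs D)"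
  obtains Y where "Y \<in> carrier_mat 2 2" "X = D * Y"
proof -
  have "col_pair X 0 \<in> col_span {col_pair D 0, col_pair D 1}" "col_pair X 1 \<in> col_span {col_pair D 0, col_pair D 1}"
    using sub col_pairs_2[OF X] col_pairs_2[OF D] by auto
  then obtain x\<^sub>0 y\<^sub>0 x\<^sub>1 y\<^sub>1 where
    "X $$ (0,0) = x\<^sub>0 * D $$ (0,0) + y\<^sub>0 * D $$ (0,1)" "X $$ (1,0) = x\<^sub>0 * D $$ (1,0) + y\<^sub>0 * D $$ (1,1)"
    "X $$ (0,1) = x\<^sub>1 * D $$ (0,0) + y\<^sub>1 * D $$ (0,1)" "X $$ (1,1) = x\<^sub>1 * D $$ (1,0) + y\<^sub>1 * D $$ (1,1)"
    by (auto simp: col_pair_def dest!: col_span_pair)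
  moreover define Y where "Y = mat 2 2 (\<lambda>(i,j). if i = 0 then (if j = 0 then x\<^sub>0 else x\<^sub>1) else (if j = 0 then y\<^sub>0 else y\<^sub>1))"
  moreover have Y: "Y \<in> carrier_mat 2 2" by (simp add: Y_def)
  ultimately have "X $$ (i,j) = (D * Y) $$ (i,j)" if "i < 2" "j < 2" for i j
    using that index_mult_mat_2[OF D Y that] by (auto simp: less_2_cases_iff Y_def mult.commute)
  then have "X = D * Y" using X D Y by (intro eq_matI) auto
  then show thesis using that Y by blast
qed

lemma left_gcd_same_col_span:
  fixes A B D :: "'a::idom mat"
  assumes edd: "elementary_divisor_domain TYPE('a)" and A: "A \<in> carrier_mat 2 2" and B: "B \<in> carrier_mat 2 2"
    and gcd: "is_left_gcd 2 A B D"
  shows "same_col_span (col_pairs D) (col_pairs A \<union> col_pairs B)"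
proof -
  have "mat_append_cols A B \<in> carrier_mat 2 4" using A B by (simp add: mat_append_cols_def)
  from edd_same_col_span_2x2[OF edd this] obtain D\<^sub>0
    where D\<^sub>0: "D\<^sub>0 \<in> carrier_mat 2 2" "same_col_span (col_pairs D\<^sub>0) (col_pairs A \<union> col_pairs B)"
    using col_pairs_mat_append_cols[OF A B] by auto
  then have "col_pairs A \<subseteq> col_span (col_pairs D\<^sub>0)" "col_pairs B \<subseteq> col_span (col_pairs D\<^sub>0)"
    unfolding same_col_span_def by auto
  then obtain A\<^sub>1 B\<^sub>1 where "A\<^sub>1 \<in> carrier_mat 2 2" "A = D\<^sub>0 * A\<^sub>1" "B\<^sub>1 \<in> carrier_mat 2 2" "B = D\<^sub>0 * B\<^sub>1"
    using left_factor_of_col_span A B D\<^sub>0(1) by metis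
  then obtain C where C: "C \<in> carrier_mat 2 2" "D = D\<^sub>0 * C" using gcd D\<^sub>0(1) unfolding is_left_gcd_def by blast
  obtain A\<^sub>2 B\<^sub>2 where AB\<^sub>2: "A\<^sub>2 \<in> carrier_mat 2 2" "B\<^sub>2 \<in> carrier_mat 2 2" "A = D * A\<^sub>2" "B = D * B\<^sub>2"
    using gcd unfolding is_left_gcd_def by blast
  have D: "D \<in> carrier_mat 2 2" using gcd by (simp add: is_left_gcd_def)
  have "col_pairs D \<subseteq> col_span (col_pairs A \<union> col_pairs B)"
    using col_pairs_mult_subset[OF D\<^sub>0(1) C(1)] D\<^sub>0(2) col_span_trans C(2) unfolding same_col_span_def by blast
  moreover have "col_pairs A \<union> col_pairs B \<subseteq> col_span (col_pairs D)"
    using col_pairs_mult_subset[OF D AB\<^sub>2(1)] col_pairs_mult_subset[OF D AB\<^sub>2(2)] AB\<^sub>2(3,4) by simp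
  ultimately show ?thesis by (simp add: same_col_span_def)
qed

lemma dvd_mult_unit_cancel:
  fixes u x z :: "'a::comm_ring_1"
  assumes "u dvd 1" "x dvd z * u"
  shows "x dvd z"
proof -
  obtain v where "1 = u * v" using assms(1) by (auto elim: dvdE)
  then have "z = z * u * v" by (simp add: mult.assoc)
  then show ?thesis using assms(2) by (metis dvd_mult2)
qed

lemma minor1_divisors_reduced_iff:
  fixes a b c d e\<^sub>1 e\<^sub>2 f\<^sub>1 f\<^sub>2 :: "'a::idom"
  assumes "e\<^sub>1 dvd e\<^sub>2" "f\<^sub>1 dvd f\<^sub>2" "(a * d - c * b) dvd 1"
  shows "x \<in> minor1_divisors {(a * e\<^sub>1, c * e\<^sub>1), (b * e\<^sub>2, d * e\<^sub>2), (f\<^sub>1, 0), (0, f\<^sub>2)} \<longleftrightarrow>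
    x dvd e\<^sub>1 \<and> x dvd f\<^sub>1"
proof
  assume "x \<in> minor1_divisors {(a * e\<^sub>1, c * e\<^sub>1), (b * e\<^sub>2, d * e\<^sub>2), (f\<^sub>1, 0), (0, f\<^sub>2)}"
  then have x: "x dvd a * e\<^sub>1" "x dvd c * e\<^sub>1" "x dvd f\<^sub>1" by (auto simp: minor1_divisors_def)
  then have "x dvd d * (a * e\<^sub>1) - b * (c * e\<^sub>1)" by (simp add: dvd_diff)
  also have "d * (a * e\<^sub>1) - b * (c * e\<^sub>1) = e\<^sub>1 * (a * d - c * b)" by (simp add: algebra_simps)
  finally show "x dvd e\<^sub>1 \<and> x dvd f\<^sub>1" using x dvd_mult_unit_cancel[OF assms(3)] by blast
next
  assume "x dvd e\<^sub>1 \<and> x dvd f\<^sub>1"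
  then show "x \<in> minor1_divisors {(a * e\<^sub>1, c * e\<^sub>1), (b * e\<^sub>2, d * e\<^sub>2), (f\<^sub>1, 0), (0, f\<^sub>2)}"
    using assms by (auto simp: minor1_divisors_def intro: dvd_trans)
qed

lemma minor2_divisors_reduced_iff:
  fixes a b c d e\<^sub>1 e\<^sub>2 f\<^sub>1 f\<^sub>2 :: "'a::idom"
  shows "x \<in> minor2_divisors {(a * e\<^sub>1, c * e\<^sub>1), (b * e\<^sub>2, d * e\<^sub>2), (f\<^sub>1, 0), (0, f\<^sub>2)} \<longleftrightarrow>
     x dvd (a * d - c * b) * (e\<^sub>1 * e\<^sub>2) \<and> x dvd c * (e\<^sub>1 * f\<^sub>1) \<and> x dvd a * (e\<^sub>1 * f\<^sub>2) \<and>
     x dvd d * (e\<^sub>2 * f\<^sub>1) \<and> x dvd b * (e\<^sub>2 * f\<^sub>2) \<and> x dvd f\<^sub>1 * f\<^sub>2"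
proof -
  have minors:
    "det2 (a * e\<^sub>1, c * e\<^sub>1) (a * e\<^sub>1, c * e\<^sub>1) = 0"
    "det2 (a * e\<^sub>1, c * e\<^sub>1) (b * e\<^sub>2, d * e\<^sub>2) = (a * d - c * b) * (e\<^sub>1 * e\<^sub>2)"
    "det2 (a * e\<^sub>1, c * e\<^sub>1) (f\<^sub>1, 0) = - (c * (e\<^sub>1 * f\<^sub>1))"
    "det2 (a * e\<^sub>1, c * e\<^sub>1) (0, f\<^sub>2) = a * (e\<^sub>1 * f\<^sub>2)"
    "det2 (b * e\<^sub>2, d * e\<^sub>2) (a * e\<^sub>1, c * e\<^sub>1) = - ((a * d - c * b) * (e\<^sub>1 * e\<^sub>2))"
    "det2 (b * e\<^sub>2, d * e\<^sub>2) (b * e\<^sub>2, d * e\<^sub>2) = 0"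
    "det2 (b * e\<^sub>2, d * e\<^sub>2) (f\<^sub>1, 0) = - (d * (e\<^sub>2 * f\<^sub>1))"
    "det2 (b * e\<^sub>2, d * e\<^sub>2) (0, f\<^sub>2) = b * (e\<^sub>2 * f\<^sub>2)"
    "det2 (f\<^sub>1, 0) (a * e\<^sub>1, c * e\<^sub>1) = c * (e\<^sub>1 * f\<^sub>1)"
    "det2 (f\<^sub>1, 0) (b * e\<^sub>2, d * e\<^sub>2) = d * (e\<^sub>2 * f\<^sub>1)"
    "det2 (f\<^sub>1, 0) (f\<^sub>1, 0) = 0"
    "det2 (f\<^sub>1, 0) (0, f\<^sub>2) = f\<^sub>1 * f\<^sub>2"
    "det2 (0, f\<^sub>2) (a * e\<^sub>1, c * e\<^sub>1) = - (a * (e\<^sub>1 * f\<^sub>2))"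
    "det2 (0, f\<^sub>2) (b * e\<^sub>2, d * e\<^sub>2) = - (b * (e\<^sub>2 * f\<^sub>2))"
    "det2 (0, f\<^sub>2) (f\<^sub>1, 0) = - (f\<^sub>1 * f\<^sub>2)"
    "det2 (0, f\<^sub>2) (0, f\<^sub>2) = 0"
    by (simp_all add: det2_def algebra_simps)
  show ?thesis unfolding minor2_divisors_def
    by (simp only: mem_Collect_eq ball_simps minors dvd_minus_iff dvd_0_right simp_thms) blast
qed

lemma gcd_mult_lcm_associated:
  fixes e f g l :: "'a::idom"
  assumes g: "g dvd e" "g dvd f" "g = \<alpha> * e + \<beta> * f" and l: "is_lcm e f l"
  shows "g * l dvd e * f" "e * f dvd g * l"
proof -
  obtain t where t: "f = g * t" using g(2) by (auto elim: dvdE)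
  obtain w where w: "e = g * w" using g(1) by (auto elim: dvdE)
  have "l dvd e * t" using l unfolding is_lcm_def by (metis dvd_triv_left mult.commute mult.left_commute t w)
  then show "g * l dvd e * f" using t by (metis mult.left_commute mult_dvd_mono dvd_refl)
  have "e * f dvd \<alpha> * (e * l) + \<beta> * (f * l)"
    using l unfolding is_lcm_def by (metis dvd_add dvd_mult mult.commute mult_dvd_mono dvd_refl)
  then show "e * f dvd g * l" using g(3) by (simp add: algebra_simps)
qed

lemma reduced_minor_conditions_iff:
  fixes a b c d e\<^sub>1 e\<^sub>2 f\<^sub>1 f\<^sub>2 g l y x :: "'a::idom"
  assumes e: "e\<^sub>1 dvd e\<^sub>2" and f: "f\<^sub>1 dvd f\<^sub>2" and u: "(a * d - c * b) dvd 1"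
    and g: "g dvd e\<^sub>1" "g dvd f\<^sub>1" "g = \<alpha> * e\<^sub>1 + \<beta> * f\<^sub>1" and l: "is_lcm e\<^sub>1 f\<^sub>1 l"
    and y: "y dvd e\<^sub>2" "y dvd f\<^sub>2" "y dvd l * c" "y = p * e\<^sub>2 + q * f\<^sub>2 + r * (l * c)"
  shows "(x dvd (a * d - c * b) * (e\<^sub>1 * e\<^sub>2) \<and> x dvd c * (e\<^sub>1 * f\<^sub>1) \<and> x dvd a * (e\<^sub>1 * f\<^sub>2) \<and>
      x dvd d * (e\<^sub>2 * f\<^sub>1) \<and> x dvd b * (e\<^sub>2 * f\<^sub>2) \<and> x dvd f\<^sub>1 * f\<^sub>2) \<longleftrightarrow> x dvd g * y"
proof
  assume h: "x dvd (a * d - c * b) * (e\<^sub>1 * e\<^sub>2) \<and> x dvd c * (e\<^sub>1 * f\<^sub>1) \<and> x dvd a * (e\<^sub>1 * f\<^sub>2) \<and>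
      x dvd d * (e\<^sub>2 * f\<^sub>1) \<and> x dvd b * (e\<^sub>2 * f\<^sub>2) \<and> x dvd f\<^sub>1 * f\<^sub>2"
  \<comment> \<open>As ad - cb is a unit, x divides e1 e2, e2 f1 and e1 f2; with x | c e1 f1 | c g l and the
    Bezout identities for g and y this gives x | g y.\<close>
  have x1: "x dvd e\<^sub>1 * e\<^sub>2" using h dvd_mult_unit_cancel[OF u, of x "e\<^sub>1 * e\<^sub>2"] by (simp add: mult.commute)
  have "x dvd c * (e\<^sub>2 * f\<^sub>1)" using h e dvd_trans mult_dvd_mono by (metis dvd_refl)
  then have "x dvd a * (d * (e\<^sub>2 * f\<^sub>1)) - b * (c * (e\<^sub>2 * f\<^sub>1))" using h by (simp add: dvd_diff)
  also have "a * (d * (e\<^sub>2 * f\<^sub>1)) - b * (c * (e\<^sub>2 * f\<^sub>1)) = (e\<^sub>2 * f\<^sub>1) * (a * d - c * b)"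
    by (simp add: algebra_simps)
  finally have x2: "x dvd e\<^sub>2 * f\<^sub>1" using dvd_mult_unit_cancel[OF u] by blast
  have "x dvd c * (e\<^sub>1 * f\<^sub>2)" using h f dvd_trans mult_dvd_mono by (metis dvd_refl)
  then have "x dvd d * (a * (e\<^sub>1 * f\<^sub>2)) - b * (c * (e\<^sub>1 * f\<^sub>2))" using h by (simp add: dvd_diff)
  also have "d * (a * (e\<^sub>1 * f\<^sub>2)) - b * (c * (e\<^sub>1 * f\<^sub>2)) = (e\<^sub>1 * f\<^sub>2) * (a * d - c * b)"
    by (simp add: algebra_simps)
  finally have x3: "x dvd e\<^sub>1 * f\<^sub>2" using dvd_mult_unit_cancel[OF u] by blast
  have "c * (e\<^sub>1 * f\<^sub>1) dvd c * (g * l)" using gcd_mult_lcm_associated(2)[OF g l] by (simp add: mult_dvd_mono)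
  then have x4: "x dvd c * (g * l)" using h dvd_trans by blast
  have "g * y = p * (\<alpha> * (e\<^sub>1 * e\<^sub>2) + \<beta> * (e\<^sub>2 * f\<^sub>1)) + q * (\<alpha> * (e\<^sub>1 * f\<^sub>2) + \<beta> * (f\<^sub>1 * f\<^sub>2)) + r * (c * (g * l))"
    using g(3) y(4) by (simp add: algebra_simps)
  then show "x dvd g * y" using x1 x2 x3 x4 h by (simp add: dvd_add)
next
  assume x: "x dvd g * y"
  have "g * y dvd g * (l * c)" using y(3) by (simp add: mult_dvd_mono)
  also have "g * (l * c) dvd (e\<^sub>1 * f\<^sub>1) * c"
    using gcd_mult_lcm_associated(1)[OF g l] by (metis mult.assoc mult_dvd_mono dvd_refl)
  finally have "g * y dvd c * (e\<^sub>1 * f\<^sub>1)" by (simp add: mult.commute)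
  moreover have "g * y dvd (a * d - c * b) * (e\<^sub>1 * e\<^sub>2)" "g * y dvd a * (e\<^sub>1 * f\<^sub>2)"
    "g * y dvd d * (e\<^sub>2 * f\<^sub>1)" "g * y dvd b * (e\<^sub>2 * f\<^sub>2)" "g * y dvd f\<^sub>1 * f\<^sub>2"
    using g(1,2) y(1,2) dvd_trans[OF g(1) e] by (auto intro: mult_dvd_mono simp: dvd_mult mult.left_commute)
  ultimately show "x dvd (a * d - c * b) * (e\<^sub>1 * e\<^sub>2) \<and> x dvd c * (e\<^sub>1 * f\<^sub>1) \<and> x dvd a * (e\<^sub>1 * f\<^sub>2) \<and>
      x dvd d * (e\<^sub>2 * f\<^sub>1) \<and> x dvd b * (e\<^sub>2 * f\<^sub>2) \<and> x dvd f\<^sub>1 * f\<^sub>2"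
    using x dvd_trans by blast
qed

lemma is_gcd_insert_gcd:
  assumes "is_gcd {a, b} g" "is_gcd {g, c} x"
  shows "is_gcd {a, b, c} x"
proof -
  have g: "g dvd a" "g dvd b" "\<And>d. d dvd a \<Longrightarrow> d dvd b \<Longrightarrow> d dvd g"
    and x: "x dvd g" "x dvd c" "\<And>d. d dvd g \<Longrightarrow> d dvd c \<Longrightarrow> d dvd x"
    using assms by (simp_all add: is_gcd_def)
  have "x dvd a" "x dvd b" using x(1) g(1,2) by (meson dvd_trans)+
  moreover have "d dvd x" if "d dvd a" "d dvd b" "d dvd c" for d using that g(3) x(3) by blast
  ultimately show ?thesis using x(2) unfolding is_gcd_def by auto
qed

lemma is_gcd_zeros: "is_gcd S g \<Longrightarrow> S \<subseteq> {0} \<Longrightarrow> g = 0"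
proof -
  assume "is_gcd S g" "S \<subseteq> {0}"
  moreover have "\<forall>s\<in>S. 0 dvd s" using \<open>S \<subseteq> {0}\<close> by auto
  ultimately have "0 dvd g" unfolding is_gcd_def by blast
  then show "g = 0" by simp
qed

lemma associated_cofactors:
  fixes a a' b b' :: "'a::idom"
  assumes "a dvd a'" "a' dvd a" "a * b dvd a' * b'" "a' * b' dvd a * b" "a dvd b" "a' dvd b'"
  shows "b dvd b' \<and> b' dvd b"
proof (cases "a = 0")
  case True
  then show ?thesis using assms by auto
next
  case False
  obtain u where u: "u dvd 1" "a' = u * a" using associatedE assms(1,2) by metis
  then have "a * b dvd a * (u * b')" "a * (u * b') dvd a * b"
    using assms(3,4) by (simp_all add: ac_simps)
  then have "b dvd u * b'" "u * b' dvd b" using False by simp_all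
  then show ?thesis using u(1) by (metis dvd_mult_unit_cancel dvd_trans dvd_triv_right mult.commute)
qed

lemma divisor_sets_eq_imp_associated:
  fixes a b :: "'a::comm_monoid_mult"
  assumes "{c. c dvd a} = {c. c dvd b}"
  shows "a dvd b \<and> b dvd a"
proof -
  have "a \<in> {c. c dvd a}" "b \<in> {c. c dvd b}" by simp_all
  then have "a \<in> {c. c dvd b}" "b \<in> {c. c dvd a}" by (simp_all only: assms)
  then show ?thesis by simp
qed

section \<open>Reduction of A and B to d-matrices\<close>

definition diag_reduction :: "'a::semiring_1 mat \<Rightarrow> 'a mat \<Rightarrow> 'a mat \<Rightarrow> 'a mat \<Rightarrow>
    'a mat \<Rightarrow> 'a mat \<Rightarrow> 'a mat \<Rightarrow> 'a mat \<Rightarrow> 'a mat \<Rightarrow> bool" where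
  "diag_reduction A B E \<Delta> P\<^sub>A Q\<^sub>A P\<^sub>B Q\<^sub>B S \<longleftrightarrow>
     P\<^sub>A \<in> carrier_mat 2 2 \<and> invertible_mat P\<^sub>A \<and> Q\<^sub>A \<in> carrier_mat 2 2 \<and> invertible_mat Q\<^sub>A \<and>
     P\<^sub>B \<in> carrier_mat 2 2 \<and> invertible_mat P\<^sub>B \<and> Q\<^sub>B \<in> carrier_mat 2 2 \<and> invertible_mat Q\<^sub>B \<and>
     P\<^sub>A * A * Q\<^sub>A = E \<and> P\<^sub>B * B * Q\<^sub>B = \<Delta> \<and> S \<in> carrier_mat 2 2 \<and> S * P\<^sub>A = P\<^sub>B"

lemma minor_divisors_diag_reduction:
  fixes A B :: "'a::idom mat"
  assumes A: "A \<in> carrier_mat 2 2" and B: "B \<in> carrier_mat 2 2"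
    and red: "diag_reduction A B (diag2 e\<^sub>1 e\<^sub>2) (diag2 f\<^sub>1 f\<^sub>2) P\<^sub>A Q\<^sub>A P\<^sub>B Q\<^sub>B S"
  defines "W \<equiv> {(S $$ (0,0) * e\<^sub>1, S $$ (1,0) * e\<^sub>1), (S $$ (0,1) * e\<^sub>2, S $$ (1,1) * e\<^sub>2), (f\<^sub>1, 0), (0, f\<^sub>2)}"
  shows "minor1_divisors (col_pairs A \<union> col_pairs B) = minor1_divisors W"
    and "minor2_divisors (col_pairs A \<union> col_pairs B) = minor2_divisors W"
    and "(S $$ (0,0) * S $$ (1,1) - S $$ (1,0) * S $$ (0,1)) dvd 1"
proof -
  have PA: "P\<^sub>A \<in> carrier_mat 2 2" and QA: "Q\<^sub>A \<in> carrier_mat 2 2" "invertible_mat Q\<^sub>A"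
    and PB: "P\<^sub>B \<in> carrier_mat 2 2" "invertible_mat P\<^sub>B" and QB: "Q\<^sub>B \<in> carrier_mat 2 2" "invertible_mat Q\<^sub>B"
    and eqA: "P\<^sub>A * A * Q\<^sub>A = diag2 e\<^sub>1 e\<^sub>2" and eqB: "P\<^sub>B * B * Q\<^sub>B = diag2 f\<^sub>1 f\<^sub>2"
    and S: "S \<in> carrier_mat 2 2" "S * P\<^sub>A = P\<^sub>B"
    using red unfolding diag_reduction_def by auto
  obtain QA' where QA': "QA' \<in> carrier_mat 2 2" "Q\<^sub>A * QA' = 1\<^sub>m 2" using invertible_matE QA by metis
  obtain QB' where QB': "QB' \<in> carrier_mat 2 2" "Q\<^sub>B * QB' = 1\<^sub>m 2" using invertible_matE QB by metis
  obtain PB' where PB': "PB' \<in> carrier_mat 2 2" "P\<^sub>B * PB' = 1\<^sub>m 2" "PB' * P\<^sub>B = 1\<^sub>m 2"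
    using invertible_matE PB by metis
  have AQ: "A * Q\<^sub>A \<in> carrier_mat 2 2" "B * Q\<^sub>B \<in> carrier_mat 2 2" using A B QA QB by auto
  have span: "same_col_span (col_pairs A \<union> col_pairs B) (col_pairs (A * Q\<^sub>A) \<union> col_pairs (B * Q\<^sub>B))"
    using same_col_span_mult_invertible[OF A QA(1) QA'] same_col_span_mult_invertible[OF B QB(1) QB']
    by (rule same_col_span_Un)
  have "mat2_apply P\<^sub>B ` (col_pairs (A * Q\<^sub>A) \<union> col_pairs (B * Q\<^sub>B)) =
      col_pairs (P\<^sub>B * (A * Q\<^sub>A)) \<union> col_pairs (P\<^sub>B * (B * Q\<^sub>B))"
    using col_pairs_mult_left[OF PB(1) AQ(1)] col_pairs_mult_left[OF PB(1) AQ(2)] by (simp add: image_Un)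
  also have "P\<^sub>B * (A * Q\<^sub>A) = S * diag2 e\<^sub>1 e\<^sub>2"
    using S PA A QA eqA by (simp add: assoc_mult_mat[of _ 2 2 _ 2 _ 2] flip: S(2))
  also have "P\<^sub>B * (B * Q\<^sub>B) = diag2 f\<^sub>1 f\<^sub>2" using eqB PB B QB by (simp add: assoc_mult_mat[of _ 2 2 _ 2 _ 2])
  finally have "mat2_apply P\<^sub>B ` (col_pairs (A * Q\<^sub>A) \<union> col_pairs (B * Q\<^sub>B)) = W"
    by (simp add: col_pairs_mult_diag2[OF S(1)] col_pairs_diag2 W_def) blast
  then show "minor1_divisors (col_pairs A \<union> col_pairs B) = minor1_divisors W"
    "minor2_divisors (col_pairs A \<union> col_pairs B) = minor2_divisors W"
    using same_col_span_minor_divisors[OF span]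
      minor_divisors_mat2_apply_invertible[OF PB(1) PB'(1,3), of "col_pairs (A * Q\<^sub>A) \<union> col_pairs (B * Q\<^sub>B)"]
    by simp_all
  have "S * (P\<^sub>A * PB') = 1\<^sub>m 2" using assoc_mult_mat[OF S(1) PA PB'(1)] S(2) PB'(2) by simp
  then show "(S $$ (0,0) * S $$ (1,1) - S $$ (1,0) * S $$ (0,1)) dvd 1"
    using det2_col_pairs_unit[OF S(1), of "P\<^sub>A * PB'"] PA PB' by (simp add: det2_def col_pair_def)
qed

lemma minor_divisors_diag_reduction_gcd:
  fixes A B :: "'a::idom mat"
  assumes edd: "elementary_divisor_domain TYPE('a)" and A: "A \<in> carrier_mat 2 2" and B: "B \<in> carrier_mat 2 2"
    and red: "diag_reduction A B (diag2 e\<^sub>1 e\<^sub>2) (diag2 f\<^sub>1 f\<^sub>2) P\<^sub>A Q\<^sub>A P\<^sub>B Q\<^sub>B S"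
    and e: "e\<^sub>1 dvd e\<^sub>2" and f: "f\<^sub>1 dvd f\<^sub>2"
    and g\<^sub>1: "is_gcd {e\<^sub>1, f\<^sub>1} g\<^sub>1" and l: "is_lcm e\<^sub>1 f\<^sub>1 l" and g\<^sub>2: "is_gcd {e\<^sub>2, f\<^sub>2, l * S $$ (1,0)} g\<^sub>2"
  shows "minor1_divisors (col_pairs A \<union> col_pairs B) = {c. c dvd g\<^sub>1}"
    and "minor2_divisors (col_pairs A \<union> col_pairs B) = {c. c dvd g\<^sub>1 * g\<^sub>2}"
proof -
  note W = minor_divisors_diag_reduction[OF A B red]
  obtain \<alpha> \<beta> where \<alpha>\<beta>: "g\<^sub>1 = \<alpha> * e\<^sub>1 + \<beta> * f\<^sub>1" using is_gcd_bezout[OF edd g\<^sub>1] .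
  obtain p q r where pqr: "g\<^sub>2 = p * e\<^sub>2 + q * f\<^sub>2 + r * (l * S $$ (1,0))" using is_gcd3_bezout[OF edd g\<^sub>2] .
  have g\<^sub>1_dvd: "g\<^sub>1 dvd e\<^sub>1" "g\<^sub>1 dvd f\<^sub>1" and g\<^sub>2_dvd: "g\<^sub>2 dvd e\<^sub>2" "g\<^sub>2 dvd f\<^sub>2" "g\<^sub>2 dvd l * S $$ (1,0)"
    using g\<^sub>1 g\<^sub>2 by (simp_all add: is_gcd_def)
  have "c dvd e\<^sub>1 \<and> c dvd f\<^sub>1 \<longleftrightarrow> c dvd g\<^sub>1" for c
  proof
    assume "c dvd e\<^sub>1 \<and> c dvd f\<^sub>1"
    then show "c dvd g\<^sub>1" using g\<^sub>1 by (simp add: is_gcd_def)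
  next
    assume "c dvd g\<^sub>1"
    then show "c dvd e\<^sub>1 \<and> c dvd f\<^sub>1" using g\<^sub>1_dvd dvd_trans by metis
  qed
  then show "minor1_divisors (col_pairs A \<union> col_pairs B) = {c. c dvd g\<^sub>1}"
    using minor1_divisors_reduced_iff[OF e f W(3)] unfolding W(1) by auto
  have "c \<in> minor2_divisors (col_pairs A \<union> col_pairs B) \<longleftrightarrow> c dvd g\<^sub>1 * g\<^sub>2" for c
    unfolding W(2) minor2_divisors_reduced_iff
    by (rule reduced_minor_conditions_iff[OF e f W(3) g\<^sub>1_dvd \<alpha>\<beta> l g\<^sub>2_dvd pqr])
  then show "minor2_divisors (col_pairs A \<union> col_pairs B) = {c. c dvd g\<^sub>1 * g\<^sub>2}" by blast
qed

lemma diag_reduction_gcd_unique: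
  fixes A B :: "'a::idom mat"
  assumes edd: "elementary_divisor_domain TYPE('a)" and A: "A \<in> carrier_mat 2 2" and B: "B \<in> carrier_mat 2 2"
    and e: "e\<^sub>1 dvd e\<^sub>2" and f: "f\<^sub>1 dvd f\<^sub>2"
    and red: "diag_reduction A B (diag2 e\<^sub>1 e\<^sub>2) (diag2 f\<^sub>1 f\<^sub>2) P\<^sub>A Q\<^sub>A P\<^sub>B Q\<^sub>B S"
    and x: "is_gcd {e\<^sub>2, f\<^sub>2} g" "is_lcm e\<^sub>1 f\<^sub>1 l" "is_gcd {g, S $$ (1,0) * l} x"
    and red': "diag_reduction A B (diag2 e\<^sub>1 e\<^sub>2) (diag2 f\<^sub>1 f\<^sub>2) P\<^sub>A' Q\<^sub>A' P\<^sub>B' Q\<^sub>B' S'"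
    and x': "is_gcd {e\<^sub>2, f\<^sub>2} g'" "is_lcm e\<^sub>1 f\<^sub>1 l'" "is_gcd {g', S' $$ (1,0) * l'} x'"
  shows "x dvd x' \<and> x' dvd x"
proof -
  obtain g\<^sub>1 where g\<^sub>1: "is_gcd {e\<^sub>1, f\<^sub>1} g\<^sub>1" using edd_gcd_exists[OF edd] .
  have "is_gcd {e\<^sub>2, f\<^sub>2, l * S $$ (1,0)} x" "is_gcd {e\<^sub>2, f\<^sub>2, l' * S' $$ (1,0)} x'"
    using is_gcd_insert_gcd x x' by (metis mult.commute)+
  \<comment> \<open>The common divisors of the 2 x 2 minors of [A B] do not depend on the reduction.\<close>
  then have "{c. c dvd g\<^sub>1 * x} = {c. c dvd g\<^sub>1 * x'}"
    using minor_divisors_diag_reduction_gcd(2)[OF edd A B red e f g\<^sub>1 x(2)]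
      minor_divisors_diag_reduction_gcd(2)[OF edd A B red' e f g\<^sub>1 x'(2)] by simp
  then have "g\<^sub>1 * x dvd g\<^sub>1 * x' \<and> g\<^sub>1 * x' dvd g\<^sub>1 * x" by (rule divisor_sets_eq_imp_associated)
  show ?thesis
  proof (cases "g\<^sub>1 = 0")
    case False
    then show ?thesis using \<open>g\<^sub>1 * x dvd g\<^sub>1 * x' \<and> g\<^sub>1 * x' dvd g\<^sub>1 * x\<close> by simp
  next
    case True
    then have "e\<^sub>1 = 0" "f\<^sub>1 = 0" using g\<^sub>1 by (auto simp: is_gcd_def)
    then have "e\<^sub>2 = 0" "f\<^sub>2 = 0" "l = 0" "l' = 0" using e f x(2) x'(2) by (auto simp: is_lcm_def)
    then have "g = 0" "g' = 0" using x(1) x'(1) is_gcd_zeros by auto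
    then have "x = 0" "x' = 0" using \<open>l = 0\<close> \<open>l' = 0\<close> x(3) x'(3) is_gcd_zeros by auto
    then show ?thesis by simp
  qed
qed

lemma left_gcd_equiv_diag2:
  fixes A B D :: "'a::idom mat"
  assumes edd: "elementary_divisor_domain TYPE('a)" and A: "A \<in> carrier_mat 2 2" and B: "B \<in> carrier_mat 2 2"
    and e: "e\<^sub>1 dvd e\<^sub>2" and f: "f\<^sub>1 dvd f\<^sub>2"
    and red: "diag_reduction A B (diag2 e\<^sub>1 e\<^sub>2) (diag2 f\<^sub>1 f\<^sub>2) P\<^sub>A Q\<^sub>A P\<^sub>B Q\<^sub>B S"
    and D: "is_left_gcd 2 A B D"
    and g\<^sub>1: "is_gcd {e\<^sub>1, f\<^sub>1} g\<^sub>1" and l: "is_lcm e\<^sub>1 f\<^sub>1 l" and g\<^sub>2: "is_gcd {e\<^sub>2, f\<^sub>2, l * S $$ (1,0)} g\<^sub>2"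
  shows "is_d_matrix (diag2 g\<^sub>1 g\<^sub>2) \<and> mat_equiv D (diag2 g\<^sub>1 g\<^sub>2)"
proof -
  have Dc: "D \<in> carrier_mat 2 2" using D by (simp add: is_left_gcd_def)
  obtain p\<^sub>1 p\<^sub>2 where p: "p\<^sub>1 dvd p\<^sub>2" "mat_equiv D (diag2 p\<^sub>1 p\<^sub>2)" using edd_equiv_diag2[OF edd Dc] .
  note minors = minor_divisors_diag_reduction_gcd[OF edd A B red e f g\<^sub>1 l g\<^sub>2]
  note span = same_col_span_minor_divisors[OF left_gcd_same_col_span[OF edd A B D]]
  have "{c. c dvd p\<^sub>1} = {c. c dvd g\<^sub>1}"
    using mat_equiv_minor_divisors(1)[OF p(2) Dc] minor1_divisors_diag2[OF p(1)] span minors(1) by simp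
  moreover have "{c. c dvd p\<^sub>1 * p\<^sub>2} = {c. c dvd g\<^sub>1 * g\<^sub>2}"
    using mat_equiv_minor_divisors(2)[OF p(2) Dc] minor2_divisors_diag2[of p\<^sub>1 p\<^sub>2] span minors(2) by simp
  ultimately have p\<^sub>1: "p\<^sub>1 dvd g\<^sub>1" "g\<^sub>1 dvd p\<^sub>1"
    and p\<^sub>1\<^sub>2: "p\<^sub>1 * p\<^sub>2 dvd g\<^sub>1 * g\<^sub>2" "g\<^sub>1 * g\<^sub>2 dvd p\<^sub>1 * p\<^sub>2"
    using divisor_sets_eq_imp_associated by blast+
  have "g\<^sub>1 dvd e\<^sub>1" "g\<^sub>1 dvd f\<^sub>1" "e\<^sub>1 dvd l" using g\<^sub>1 l by (simp_all add: is_gcd_def is_lcm_def)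
  then have "g\<^sub>1 dvd e\<^sub>2" "g\<^sub>1 dvd f\<^sub>2" "g\<^sub>1 dvd l * S $$ (1,0)" using e f by (auto intro: dvd_trans)
  then have g\<^sub>1\<^sub>2: "g\<^sub>1 dvd g\<^sub>2" using g\<^sub>2 by (simp add: is_gcd_def)
  then have "p\<^sub>2 dvd g\<^sub>2" "g\<^sub>2 dvd p\<^sub>2" using associated_cofactors[OF p\<^sub>1 p\<^sub>1\<^sub>2 p(1)] by auto
  then have "mat_equiv D (diag2 g\<^sub>1 g\<^sub>2)"
    using mat_equiv_trans[OF p(2) mat_equiv_diag2_associated] p\<^sub>1 by blast
  then show ?thesis using g\<^sub>1\<^sub>2 by (simp add: is_d_matrix_diag2_iff)
qed

theorem theorem2p15:
  fixes A B P\<^sub>A Q\<^sub>A P\<^sub>B Q\<^sub>B S :: "'a::idom mat"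
    and \<epsilon>\<^sub>1 \<epsilon>\<^sub>2 \<delta>\<^sub>1 \<delta>\<^sub>2 :: 'a
  assumes edd: "elementary_divisor_domain TYPE('a)"
    and A: "A \<in> carrier_mat 2 2" and B: "B \<in> carrier_mat 2 2"
    and E: "is_d_matrix (diag2 \<epsilon>\<^sub>1 \<epsilon>\<^sub>2)" and \<Delta>: "is_d_matrix (diag2 \<delta>\<^sub>1 \<delta>\<^sub>2)"
    and PA: "P\<^sub>A \<in> carrier_mat 2 2" "invertible_mat P\<^sub>A"
    and QA: "Q\<^sub>A \<in> carrier_mat 2 2" "invertible_mat Q\<^sub>A"
    and PB: "P\<^sub>B \<in> carrier_mat 2 2" "invertible_mat P\<^sub>B"
    and QB: "Q\<^sub>B \<in> carrier_mat 2 2" "invertible_mat Q\<^sub>B"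
    and eqA: "P\<^sub>A * A * Q\<^sub>A = diag2 \<epsilon>\<^sub>1 \<epsilon>\<^sub>2"
    and eqB: "P\<^sub>B * B * Q\<^sub>B = diag2 \<delta>\<^sub>1 \<delta>\<^sub>2"
    and S: "S \<in> carrier_mat 2 2" "S * P\<^sub>A = P\<^sub>B"   \<comment> \<open>S = P_B P_A^{-1}\<close>
  shows
    "(\<forall>g l x P\<^sub>A' Q\<^sub>A' P\<^sub>B' Q\<^sub>B' S' g' l' x'.
        is_gcd {\<epsilon>\<^sub>2, \<delta>\<^sub>2} g \<and> is_lcm \<epsilon>\<^sub>1 \<delta>\<^sub>1 l \<and> is_gcd {g, S $$ (1,0) * l} x \<and>
        P\<^sub>A' \<in> carrier_mat 2 2 \<and> invertible_mat P\<^sub>A' \<and>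
        Q\<^sub>A' \<in> carrier_mat 2 2 \<and> invertible_mat Q\<^sub>A' \<and>
        P\<^sub>B' \<in> carrier_mat 2 2 \<and> invertible_mat P\<^sub>B' \<and>
        Q\<^sub>B' \<in> carrier_mat 2 2 \<and> invertible_mat Q\<^sub>B' \<and>
        P\<^sub>A' * A * Q\<^sub>A' = diag2 \<epsilon>\<^sub>1 \<epsilon>\<^sub>2 \<and> P\<^sub>B' * B * Q\<^sub>B' = diag2 \<delta>\<^sub>1 \<delta>\<^sub>2 \<and>
        S' \<in> carrier_mat 2 2 \<and> S' * P\<^sub>A' = P\<^sub>B' \<and>
        is_gcd {\<epsilon>\<^sub>2, \<delta>\<^sub>2} g' \<and> is_lcm \<epsilon>\<^sub>1 \<delta>\<^sub>1 l' \<and> is_gcd {g', S' $$ (1,0) * l'} x'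
        \<longrightarrow> x dvd x' \<and> x' dvd x)
     \<and>
     (\<forall>D g\<^sub>1 l g\<^sub>2.
        is_left_gcd 2 A B D \<and> is_gcd {\<epsilon>\<^sub>1, \<delta>\<^sub>1} g\<^sub>1 \<and> is_lcm \<epsilon>\<^sub>1 \<delta>\<^sub>1 l \<and>
        is_gcd {\<epsilon>\<^sub>2, \<delta>\<^sub>2, l * S $$ (1,0)} g\<^sub>2
        \<longrightarrow> is_d_matrix (diag2 g\<^sub>1 g\<^sub>2) \<and> mat_equiv D (diag2 g\<^sub>1 g\<^sub>2))"
proof -
  have e: "\<epsilon>\<^sub>1 dvd \<epsilon>\<^sub>2" "\<delta>\<^sub>1 dvd \<delta>\<^sub>2" using E \<Delta> by (simp_all add: is_d_matrix_diag2_iff)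
  have red: "diag_reduction A B (diag2 \<epsilon>\<^sub>1 \<epsilon>\<^sub>2) (diag2 \<delta>\<^sub>1 \<delta>\<^sub>2) P\<^sub>A Q\<^sub>A P\<^sub>B Q\<^sub>B S"
    unfolding diag_reduction_def using PA QA PB QB eqA eqB S by blast
  show ?thesis
  proof (rule conjI; intro allI impI; elim conjE)
    fix g l x P\<^sub>A' Q\<^sub>A' P\<^sub>B' Q\<^sub>B' S' g' l' x'
    assume x: "is_gcd {\<epsilon>\<^sub>2, \<delta>\<^sub>2} g" "is_lcm \<epsilon>\<^sub>1 \<delta>\<^sub>1 l" "is_gcd {g, S $$ (1,0) * l} x"
      and data: "P\<^sub>A' \<in> carrier_mat 2 2" "invertible_mat P\<^sub>A'" "Q\<^sub>A' \<in> carrier_mat 2 2" "invertible_mat Q\<^sub>A'"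
      "P\<^sub>B' \<in> carrier_mat 2 2" "invertible_mat P\<^sub>B'" "Q\<^sub>B' \<in> carrier_mat 2 2" "invertible_mat Q\<^sub>B'"
      "P\<^sub>A' * A * Q\<^sub>A' = diag2 \<epsilon>\<^sub>1 \<epsilon>\<^sub>2" "P\<^sub>B' * B * Q\<^sub>B' = diag2 \<delta>\<^sub>1 \<delta>\<^sub>2"
      "S' \<in> carrier_mat 2 2" "S' * P\<^sub>A' = P\<^sub>B'"
      and x': "is_gcd {\<epsilon>\<^sub>2, \<delta>\<^sub>2} g'" "is_lcm \<epsilon>\<^sub>1 \<delta>\<^sub>1 l'" "is_gcd {g', S' $$ (1,0) * l'} x'"
    have "diag_reduction A B (diag2 \<epsilon>\<^sub>1 \<epsilon>\<^sub>2) (diag2 \<delta>\<^sub>1 \<delta>\<^sub>2) P\<^sub>A' Q\<^sub>A' P\<^sub>B' Q\<^sub>B' S'"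
      unfolding diag_reduction_def using data by blast
    then show "x dvd x' \<and> x' dvd x" by (rule diag_reduction_gcd_unique[OF edd A B e red x _ x'])
  next
    fix D g\<^sub>1 l g\<^sub>2
    assume "is_left_gcd 2 A B D" "is_gcd {\<epsilon>\<^sub>1, \<delta>\<^sub>1} g\<^sub>1" "is_lcm \<epsilon>\<^sub>1 \<delta>\<^sub>1 l"
      "is_gcd {\<epsilon>\<^sub>2, \<delta>\<^sub>2, l * S $$ (1,0)} g\<^sub>2"
    then show "is_d_matrix (diag2 g\<^sub>1 g\<^sub>2) \<and> mat_equiv D (diag2 g\<^sub>1 g\<^sub>2)"
      by (rule left_gcd_equiv_diag2[OF edd A B e red])
  qed
qed

end
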